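(* Let $t\ge 2$ and let $\mathscr{C}$ be a $(t,1)_q$ generalized merge-convertible code over $\mathbb{F}_q$ with initial codes $\mathcal{C}^{I_1},\dots,\mathcal{C}^{I_t}$ (where $\mathcal{C}^{I_i}$ is an $[n_{I_i},k_{I_i}]_q$ code) and final code $\mathcal{C}^F$ (an $[n_F,k_F]_q$ code). Assume that $\mathcal{C}^F$ has $(r,\delta)$-locality and let $d_F$ denote its minimum distance. Then for every $i\in[t]$, the set $\mathcal{U}_i$ of unchanged symbols of $\mathcal{C}^{I_i}$ satisfies $$|\mathcal{U}_i|\le k_{I_i}+n_F-k_F-d_F+1-\left(\left\lceil \frac{k_F-k_{I_i}}{r}\right\rceil-1\right)(\delta-1).$$
   Context: All codes are linear over the finite field $\mathbb{F}_q$; $[n]=\{1,\dots,n\}$. A $(t,1)_q$ generalized convertible code (called a generalized merge-convertible code when $t>1$) consists of $t$ initial linear codes $\mathcal{C}^{I_1},\dots,\mathcal{C}^{I_t}$, where $\mathcal{C}^{I_i}$ is an $[n_{I_i},k_{I_i}]_q$ code, a final linear $[n_F,k_F]_q$ code $\mathcal{C}^F$ with $k_F=\sum_{i=1}^t k_{I_i}$, and a linear bijection $\phi:\mathcal{C}^{I_1}\times\cdots\times\mathcal{C}^{I_t}\to\mathcal{C}^F$. The conversion comes with the following data: for each $i$, a set $\mathcal{U}_i$ of coordinates of $\mathcal{C}^{I_i}$ (unchanged symbols) together with an injective assignment of each $u\in\mathcal{U}_i$ to a coordinate of $\mathcal{C}^F$, images of different pairs $(i,u)$ being distinct, such that for all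 $(c_1,\dots,c_t)$ the coordinate of $\phi(c_1,\dots,c_t)$ assigned to $u$ equals the $u$-th coordinate of $c_i$; $\mathcal{W}$ is the set of coordinates of $\mathcal{C}^F$ not assigned to any unchanged symbol (written symbols); and for each $i$ a set $\mathcal{R}_i$ of coordinates of $\mathcal{C}^{I_i}$ (read symbols) such that $\phi(c_1,\dots,c_t)|_{\mathcal{W}}$ is a function of $(c_1|_{\mathcal{R}_1},\dots,c_t|_{\mathcal{R}_t})$. A code $\mathcal{C}\subseteq\mathbb{F}_q^n$ has $(r,\delta)$-locality (with $r\ge1$, $\delta\ge 2$) if every coordinate $i\in[n]$ lies in a subset $J_i\subseteq[n]$ with $|J_i|\le r+\delta-1$ such that the punctured code $\mathcal{C}|_{J_i}$ has minimum distance at least $\delta$. *)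

theory Defs
  imports Complex_Main "HOL-Library.Function_Algebras"
begin

text \<open>Vectors of length n over the field 'a are functions nat => 'a vanishing
outside the coordinate set {0..<n} (coordinates are 0-indexed).\<close>

definition vscale :: "'a::field \<Rightarrow> (nat \<Rightarrow> 'a) \<Rightarrow> (nat \<Rightarrow> 'a)" where
  "vscale c v = (\<lambda>j. c * v j)"

definition hdist :: "(nat \<Rightarrow> 'a::zero) \<Rightarrow> (nat \<Rightarrow> 'a) \<Rightarrow> nat" where
  "hdist x y = card {j. x j \<noteq> y j}"

definition lin_code :: "nat \<Rightarrow> nat \<Rightarrow> (nat \<Rightarrow> 'a::field) set \<Rightarrow> bool" where
  "lin_code n k C \<longleftrightarrow>
     (\<forall>c\<in>C. \<forall>j. n \<le> j \<longrightarrow> c j = 0) \<and>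
     0 \<in> C \<and> (\<forall>x\<in>C. \<forall>y\<in>C. x + y \<in> C) \<and> (\<forall>a. \<forall>x\<in>C. vscale a x \<in> C) \<and>
     vector_space.dim vscale C = k"

text \<open>Minimum (Hamming) distance of a code with at least two codewords.\<close>
definition min_dist :: "(nat \<Rightarrow> 'a::zero) set \<Rightarrow> nat" where
  "min_dist C = Min {hdist x y | x y. x \<in> C \<and> y \<in> C \<and> x \<noteq> y}"

text \<open>Minimum distance at least delta (vacuous for codes with one codeword,
whose minimum distance is conventionally infinite).\<close>
definition min_dist_ge :: "(nat \<Rightarrow> 'a::zero) set \<Rightarrow> nat \<Rightarrow> bool" where
  "min_dist_ge C \<delta> \<longleftrightarrow> (\<forall>x\<in>C. \<forall>y\<in>C. x \<noteq> y \<longrightarrow> \<delta> \<le> hdist x y)"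

definition puncture :: "nat set \<Rightarrow> (nat \<Rightarrow> 'a::zero) set \<Rightarrow> (nat \<Rightarrow> 'a) set" where
  "puncture J C = (\<lambda>c. \<lambda>j. if j \<in> J then c j else 0) ` C"

definition has_locality :: "nat \<Rightarrow> (nat \<Rightarrow> 'a::zero) set \<Rightarrow> nat \<Rightarrow> nat \<Rightarrow> bool" where
  "has_locality n C r \<delta> \<longleftrightarrow>
     (\<forall>i<n. \<exists>J. i \<in> J \<and> J \<subseteq> {0..<n} \<and> card J \<le> r + \<delta> - 1 \<and>
              min_dist_ge (puncture J C) \<delta>)"

text \<open>Tuples (c_1,...,c_t) of initial codewords: functions i => codeword,
with c_i in C^{I_i} for i in {1..t} and c_i = 0 otherwise.\<close>
definition tuples :: "nat \<Rightarrow> (nat \<Rightarrow> (nat \<Rightarrow> 'a::zero) set) \<Rightarrow> (nat \<Rightarrow> nat \<Rightarrow> 'a) set" where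
  "tuples t CI = {c. (\<forall>i\<in>{1..t}. c i \<in> CI i) \<and> (\<forall>i. i \<notin> {1..t} \<longrightarrow> c i = 0)}"

text \<open>A (t,1)_q generalized convertible code with conversion data
  phi (linear bijection), U (unchanged symbols), sigma (their assignment to
  coordinates of the final code), W (written symbols), R (read symbols).\<close>
definition gen_conv_code ::
  "nat \<Rightarrow> (nat \<Rightarrow> nat) \<Rightarrow> (nat \<Rightarrow> nat) \<Rightarrow> (nat \<Rightarrow> (nat \<Rightarrow> 'a::field) set) \<Rightarrow>
   nat \<Rightarrow> nat \<Rightarrow> (nat \<Rightarrow> 'a) set \<Rightarrow>
   ((nat \<Rightarrow> nat \<Rightarrow> 'a) \<Rightarrow> (nat \<Rightarrow> 'a)) \<Rightarrow>
   (nat \<Rightarrow> nat set) \<Rightarrow> (nat \<Rightarrow> nat \<Rightarrow> nat) \<Rightarrow> nat set \<Rightarrow> (nat \<Rightarrow> nat set) \<Rightarrow> bool" where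
  "gen_conv_code t nI kI CI nF kF CF \<phi> U \<sigma> W R \<longleftrightarrow>
     t \<ge> 1 \<and>
     (\<forall>i\<in>{1..t}. lin_code (nI i) (kI i) (CI i)) \<and>
     lin_code nF kF CF \<and>
     kF = (\<Sum>i=1..t. kI i) \<and>
     (\<forall>c\<in>tuples t CI. \<forall>d\<in>tuples t CI. \<phi> (c + d) = \<phi> c + \<phi> d) \<and>
     (\<forall>a. \<forall>c\<in>tuples t CI. \<phi> (\<lambda>i. vscale a (c i)) = vscale a (\<phi> c)) \<and>
     bij_betw \<phi> (tuples t CI) CF \<and>
     (\<forall>i\<in>{1..t}. U i \<subseteq> {0..<nI i}) \<and>
     (\<forall>i\<in>{1..t}. \<forall>u\<in>U i. \<sigma> i u < nF) \<and>
     (\<forall>i\<in>{1..t}. \<forall>j\<in>{1..t}. \<forall>u\<in>U i. \<forall>v\<in>U j. \<sigma> i u = \<sigma> j v \<longrightarrow> i = j \<and> u = v) \<and>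
     (\<forall>c\<in>tuples t CI. \<forall>i\<in>{1..t}. \<forall>u\<in>U i. \<phi> c (\<sigma> i u) = c i u) \<and>
     W = {0..<nF} - (\<Union>i\<in>{1..t}. \<sigma> i ` U i) \<and>
     (\<forall>i\<in>{1..t}. R i \<subseteq> {0..<nI i}) \<and>
     (\<forall>c\<in>tuples t CI. \<forall>d\<in>tuples t CI.
        (\<forall>i\<in>{1..t}. \<forall>j\<in>R i. c i j = d i j) \<longrightarrow> (\<forall>w\<in>W. \<phi> c w = \<phi> d w))"

end

theory Submission
  imports Defs "HOL-Library.FuncSet" "HOL-Library.Cardinality"
begin

(* Let C be the subcode of the final code formed by the images of the message tuples whose i-th
   component is zero. It has dimension k_F - k_{I_i}, vanishes on the |U_i| positions holding the
   unchanged symbols of the i-th initial code, and inherits the (r,delta)-locality of the final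
   code on the remaining n_F - |U_i| positions. The Singleton-like bound for codes with locality,
   d + k + (ceil(k/r) - 1)(delta - 1) <= n + 1, applied to C on these positions gives a nonzero
   codeword of the final code whose weight bounds d_F.
   The locality bound is proved by induction on ceil(k/r) - 1. The restriction of C to a local
   group J has distance delta, so by the Singleton bound its dimension is at most
   |J| - delta + 1 <= r; hence the subcode vanishing on J loses at most r dimensions while |J|
   positions are removed, which pays for one term delta - 1. Dimensions are compared by counting
   codewords over the finite field. *)

interpretation vs: vector_space "vscale :: 'a::field \<Rightarrow> (nat \<Rightarrow> 'a) \<Rightarrow> (nat \<Rightarrow> 'a)"
  by unfold_locales (auto simp: vscale_def fun_eq_iff algebra_simps)

lemma vscale_apply: "vscale a c j = a * c j"
  by (simp add: vscale_def)

section \<open>Counting codewords over a finite field\<close>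

lemma one_less_card_field: "1 < CARD('a::{finite,field})"
proof -
  have "card {0, 1::'a} \<le> CARD('a)"
    by (rule card_mono) simp_all
  then show ?thesis
    by simp
qed

lemma card_span_independent:
  fixes B :: "(nat \<Rightarrow> 'a::{finite,field}) set"
  assumes "finite B" "vs.independent B"
  shows "card (vs.span B) = CARD('a) ^ card B"
  using assms
proof (induction B rule: finite_induct)
  case empty
  then show ?case by simp
next
  case (insert b B)
  then have indep: "vs.independent B" and b: "b \<notin> vs.span B"
    using vs.independent_insert[of b B] by auto
  let ?f = "\<lambda>(a, x). vscale a b + x"
  have span_eq: "vs.span (insert b B) = ?f ` (UNIV \<times> vs.span B)"
  proof (intro set_eqI iffI)
    fix y assume "y \<in> vs.span (insert b B)"
    then obtain a where "y - vscale a b \<in> vs.span B"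
      by (auto simp: vs.span_insert)
    then show "y \<in> ?f ` (UNIV \<times> vs.span B)"
      by (intro image_eqI[of _ _ "(a, y - vscale a b)"]) auto
  next
    fix y assume "y \<in> ?f ` (UNIV \<times> vs.span B)"
    then obtain a x where "y = vscale a b + x" "x \<in> vs.span B"
      by auto
    then show "y \<in> vs.span (insert b B)"
      unfolding vs.span_insert by (intro CollectI exI[of _ a]) simp
  qed
  have "inj_on ?f (UNIV \<times> vs.span B)"
  proof (rule inj_onI, clarify)
    fix a x a' x'
    assume x: "x \<in> vs.span B" and x': "x' \<in> vs.span B"
      and eq: "vscale a b + x = vscale a' b + x'"
    show "a = a' \<and> x = x'"
    proof (rule ccontr)
      assume "\<not> (a = a' \<and> x = x')"
      with eq have "a \<noteq> a'" by auto
      from eq have "vscale (a - a') b = x' - x"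
        by (simp add: vs.scale_left_diff_distrib algebra_simps)
      then have "b = vscale (inverse (a - a')) (x' - x)"
        using \<open>a \<noteq> a'\<close> by (metis vs.scale_scale vs.scale_one left_inverse right_minus_eq)
      then have "b \<in> vs.span B"
        using x x' by (simp add: vs.span_diff vs.span_scale)
      with b show False ..
    qed
  qed
  then have "card (vs.span (insert b B)) = CARD('a) * card (vs.span B)"
    by (simp add: span_eq card_image card_cartesian_product)
  with insert.IH indep insert.hyps show ?case by simp
qed

lemma card_subspace:
  fixes C :: "(nat \<Rightarrow> 'a::{finite,field}) set"
  assumes "finite C" "vs.subspace C"
  shows "card C = CARD('a) ^ vs.dim C"
proof -
  obtain B where B: "B \<subseteq> C" "vs.independent B" "C \<subseteq> vs.span B" "card B = vs.dim C"
    by (rule vs.basis_exists)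
  then have "vs.span B = C"
    using assms(2) by (intro vs.span_subspace)
  moreover have "finite B"
    using B(1) assms(1) finite_subset by blast
  ultimately show ?thesis
    using card_span_independent[of B] B(2,4) by simp
qed

lemma exists_nonzero_of_dim_pos:
  assumes "vs.dim C \<ge> 1"
  shows "\<exists>c\<in>C. c \<noteq> 0"
proof -
  obtain B where B: "B \<subseteq> C" "vs.independent B" "C \<subseteq> vs.span B" "card B = vs.dim C"
    by (rule vs.basis_exists)
  with assms obtain b where b: "b \<in> B"
    by (metis card.empty ex_in_conv not_one_le_zero)
  then have "b \<noteq> 0"
    using B(2) vs.dependent_zero by blast
  with b B(1) show ?thesis
    by blast
qed

lemma dim_pos_of_nonzero:
  fixes C :: "(nat \<Rightarrow> 'a::{finite,field}) set"
  assumes "finite C" "vs.subspace C" "c \<in> C" "c \<noteq> 0"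
  shows "vs.dim C \<ge> 1"
proof (rule ccontr)
  assume "\<not> vs.dim C \<ge> 1"
  then have "card C = 1"
    using card_subspace[OF assms(1,2)] by simp
  moreover have "{0, c} \<subseteq> C"
    using assms(2-3) vs.subspace_0 by blast
  ultimately show False
    using card_mono[OF assms(1), of "{0, c}"] assms(4) by simp
qed

lemma card_le_card_mult_card_image:
  fixes C K :: "'b::ab_group_add set"
  assumes "finite C" "finite K"
    and "\<And>x y. x \<in> C \<Longrightarrow> y \<in> C \<Longrightarrow> f x = f y \<Longrightarrow> x - y \<in> K"
  shows "card C \<le> card K * card (f ` C)"
proof -
  have fibre: "card {x\<in>C. f x = z} \<le> card K" if z: "z \<in> f ` C" for z
  proof -
    obtain x0 where x0: "x0 \<in> C" "f x0 = z"
      using z by blast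
    have "inj_on (\<lambda>x. x - x0) {x\<in>C. f x = z}"
      by (rule inj_onI) simp
    moreover have "(\<lambda>x. x - x0) ` {x\<in>C. f x = z} \<subseteq> K"
      using assms(3) x0 by auto
    ultimately show ?thesis
      using assms(2) card_inj_on_le by blast
  qed
  have "card C = card (\<Union>z\<in>f ` C. {x\<in>C. f x = z})"
    by (rule arg_cong[of _ _ card]) blast
  also have "\<dots> \<le> (\<Sum>z\<in>f ` C. card {x\<in>C. f x = z})"
    using assms(1) by (intro card_UN_le) simp
  also have "\<dots> \<le> (\<Sum>z\<in>f ` C. card K)"
    by (intro sum_mono fibre)
  finally show ?thesis
    by (simp add: mult.commute)
qed

definition supported_in :: "nat set \<Rightarrow> (nat \<Rightarrow> 'a::zero) set \<Rightarrow> bool" where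
  "supported_in N C \<longleftrightarrow> (\<forall>c\<in>C. \<forall>j. j \<notin> N \<longrightarrow> c j = 0)"

definition vanishing_subcode :: "nat set \<Rightarrow> (nat \<Rightarrow> 'a::zero) set \<Rightarrow> (nat \<Rightarrow> 'a) set" where
  "vanishing_subcode T C = {c\<in>C. \<forall>j\<in>T. c j = 0}"

lemma
  fixes C :: "(nat \<Rightarrow> 'a::{finite,zero}) set"
  assumes "finite N" "supported_in N C"
  shows finite_supported_in: "finite C"
    and card_supported_in_le: "card C \<le> CARD('a) ^ card N"
proof -
  have inj: "inj_on (\<lambda>c. restrict c N) C"
  proof (rule inj_onI, rule ext)
    fix x y j
    assume xy: "x \<in> C" "y \<in> C" and eq: "restrict x N = restrict y N"
    show "x j = y j"
    proof (cases "j \<in> N")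
      case True
      then show ?thesis
        using fun_cong[OF eq, of j] by simp
    next
      case False
      then show ?thesis
        using xy assms(2) unfolding supported_in_def by metis
    qed
  qed
  have into: "(\<lambda>c. restrict c N) ` C \<subseteq> PiE N (\<lambda>_. UNIV)"
    by auto
  have fin: "finite (PiE N (\<lambda>_. UNIV :: 'a set))"
    using assms(1) by (simp add: finite_PiE)
  show "finite C"
    using finite_imageD[OF finite_subset[OF into fin] inj] .
  show "card C \<le> CARD('a) ^ card N"
    using card_inj_on_le[OF inj into fin] by (simp add: card_PiE assms(1))
qed

lemma supported_in_puncture: "supported_in J (puncture J C)"
  unfolding supported_in_def puncture_def by auto

lemma supported_in_vanishing_subcode:
  "supported_in N C \<Longrightarrow> supported_in (N - T) (vanishing_subcode T C)"
  unfolding supported_in_def vanishing_subcode_def by auto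

lemma subspace_vanishing_subcode:
  "vs.subspace C \<Longrightarrow> vs.subspace (vanishing_subcode T C)"
  unfolding vs.subspace_def vanishing_subcode_def by (auto simp: vscale_apply)

lemma subspace_puncture:
  assumes "vs.subspace C"
  shows "vs.subspace (puncture J C)"
proof -
  have "module_hom vscale vscale (\<lambda>c j. if j \<in> J then c j else (0::'a))"
    by (simp add: module_hom_iff vs.module_axioms fun_eq_iff vscale_apply)
  then show ?thesis
    unfolding puncture_def using assms by (rule module_hom.subspace_image)
qed

lemma subspace_of_lin_code: "lin_code n k C \<Longrightarrow> vs.subspace C"
  unfolding lin_code_def vs.subspace_def by blast

lemma supported_in_of_lin_code: "lin_code n k C \<Longrightarrow> supported_in {0..<n} C"
  unfolding lin_code_def supported_in_def by auto

lemma
  fixes C :: "(nat \<Rightarrow> 'a::{finite,field}) set"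
  assumes "lin_code n k C"
  shows finite_lin_code: "finite C"
    and card_lin_code: "card C = CARD('a) ^ k"
proof -
  show "finite C"
    using finite_supported_in[OF _ supported_in_of_lin_code[OF assms]] by simp
  moreover have "vs.dim C = k"
    using assms unfolding lin_code_def by blast
  ultimately show "card C = CARD('a) ^ k"
    using card_subspace subspace_of_lin_code[OF assms] by metis
qed

lemma dim_le_card_supported_in:
  fixes C :: "(nat \<Rightarrow> 'a::{finite,field}) set"
  assumes "vs.subspace C" "finite N" "supported_in N C"
  shows "vs.dim C \<le> card N"
proof -
  have "CARD('a) ^ vs.dim C \<le> CARD('a) ^ card N"
    using card_subspace[OF finite_supported_in[OF assms(2,3)] assms(1)]
      card_supported_in_le[OF assms(2,3)] by simp
  then show ?thesis
    by (rule power_le_imp_le_exp[OF one_less_card_field[where 'a='a]])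
qed

lemma dim_le_dim_vanishing_subcode_add_dim_puncture:
  fixes C :: "(nat \<Rightarrow> 'a::{finite,field}) set"
  assumes "vs.subspace C" "finite C"
  shows "vs.dim C \<le> vs.dim (vanishing_subcode J C) + vs.dim (puncture J C)"
proof -
  let ?K = "vanishing_subcode J C" and ?P = "puncture J C"
  have "card C \<le> card ?K * card ?P"
    unfolding puncture_def
  proof (rule card_le_card_mult_card_image)
    fix x y
    assume "x \<in> C" "y \<in> C" "(\<lambda>j. if j \<in> J then x j else 0) = (\<lambda>j. if j \<in> J then y j else 0)"
    then show "x - y \<in> ?K"
      using vs.subspace_diff[OF assms(1)] unfolding vanishing_subcode_def
      by (auto simp: fun_eq_iff) metis
  qed (use assms(2) in \<open>simp_all add: vanishing_subcode_def\<close>)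
  moreover have "card ?K = CARD('a) ^ vs.dim ?K"
    using assms by (intro card_subspace subspace_vanishing_subcode) (simp_all add: vanishing_subcode_def)
  moreover have "card ?P = CARD('a) ^ vs.dim ?P"
    using assms by (intro card_subspace subspace_puncture) (simp_all add: puncture_def)
  ultimately have "CARD('a) ^ vs.dim C \<le> CARD('a) ^ (vs.dim ?K + vs.dim ?P)"
    using card_subspace[OF assms(2,1)] by (simp add: power_add)
  then show ?thesis
    by (rule power_le_imp_le_exp[OF one_less_card_field[where 'a='a]])
qed

section \<open>The Singleton bound\<close>

lemma exists_low_weight_codeword:
  fixes C :: "(nat \<Rightarrow> 'a::{finite,field}) set"
  assumes "vs.subspace C" "finite N" "supported_in N C" "vs.dim C \<ge> 1"
  shows "\<exists>c\<in>C. c \<noteq> 0 \<and> hdist c 0 + vs.dim C \<le> card N + 1"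
proof -
  have "vs.dim C - 1 \<le> card N"
    using dim_le_card_supported_in[OF assms(1-3)] by simp
  then obtain T where T: "T \<subseteq> N" "card T = vs.dim C - 1"
    by (meson obtain_subset_with_card_n)
  have "finite T"
    using T(1) assms(2) finite_subset by blast
  then have "vs.dim (puncture T C) \<le> card T"
    by (intro dim_le_card_supported_in subspace_puncture assms(1) supported_in_puncture)
  then have "vs.dim (vanishing_subcode T C) \<ge> 1"
    using dim_le_dim_vanishing_subcode_add_dim_puncture[OF assms(1) finite_supported_in[OF assms(2,3)], of T]
      T(2) assms(4) by linarith
  then obtain c where c: "c \<in> vanishing_subcode T C" "c \<noteq> 0"
    using exists_nonzero_of_dim_pos by blast
  have "{j. c j \<noteq> 0} \<subseteq> N - T"
    using c(1) supported_in_vanishing_subcode[OF assms(3), of T] unfolding supported_in_def by auto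
  then have "hdist c 0 \<le> card (N - T)"
    unfolding hdist_def using assms(2) by (simp add: card_mono)
  also have "card (N - T) = card N - card T"
    using \<open>finite T\<close> T(1) by (rule card_Diff_subset)
  finally have "hdist c 0 \<le> card N - card T" .
  moreover have "c \<in> C"
    using c(1) unfolding vanishing_subcode_def by simp
  ultimately show ?thesis
    using c(2) T(2) assms(4) \<open>vs.dim C - 1 \<le> card N\<close> by (intro bexI[of _ c]) auto
qed

lemma singleton_bound:
  fixes C :: "(nat \<Rightarrow> 'a::{finite,field}) set"
  assumes "vs.subspace C" "finite N" "supported_in N C" "min_dist_ge C \<delta>" "vs.dim C \<ge> 1"
  shows "vs.dim C + \<delta> \<le> card N + 1"
proof -
  obtain c where c: "c \<in> C" "c \<noteq> 0" "hdist c 0 + vs.dim C \<le> card N + 1"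
    using exists_low_weight_codeword[OF assms(1-3,5)] by blast
  moreover have "\<delta> \<le> hdist c 0"
    using assms(4) c(1,2) vs.subspace_0[OF assms(1)] unfolding min_dist_ge_def by blast
  ultimately show ?thesis
    by linarith
qed

lemma min_dist_le_hdist:
  assumes "finite C" "x \<in> C" "y \<in> C" "x \<noteq> y"
  shows "min_dist C \<le> hdist x y"
  unfolding min_dist_def
proof (rule Min_le)
  have "{hdist x y |x y. x \<in> C \<and> y \<in> C \<and> x \<noteq> y} \<subseteq> (\<lambda>(x, y). hdist x y) ` (C \<times> C)"
    by auto
  then show "finite {hdist x y |x y. x \<in> C \<and> y \<in> C \<and> x \<noteq> y}"
    by (rule finite_subset) (use assms(1) in simp)
qed (use assms in blast)

lemma min_dist_le_weight:
  fixes C :: "(nat \<Rightarrow> 'a::{finite,field}) set"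
  assumes "lin_code n k C" "c \<in> C" "c \<noteq> 0"
  shows "min_dist C \<le> hdist c 0"
  using min_dist_le_hdist[OF finite_lin_code[OF assms(1)] assms(2) _ assms(3)]
    vs.subspace_0[OF subspace_of_lin_code[OF assms(1)]] by blast

section \<open>The Singleton-like bound for codes with locality\<close>

definition locality_on :: "nat set \<Rightarrow> (nat \<Rightarrow> 'a::zero) set \<Rightarrow> nat \<Rightarrow> nat \<Rightarrow> bool" where
  "locality_on N C r \<delta> \<longleftrightarrow>
     (\<forall>i\<in>N. \<exists>J. i \<in> J \<and> J \<subseteq> N \<and> card J \<le> r + \<delta> - 1 \<and> min_dist_ge (puncture J C) \<delta>)"

lemma has_locality_iff_locality_on: "has_locality n C r \<delta> \<longleftrightarrow> locality_on {0..<n} C r \<delta>"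
  unfolding has_locality_def locality_on_def by auto

lemma locality_on_vanishing:
  assumes "finite N" "locality_on N C r \<delta>" "C' \<subseteq> C" "\<forall>c\<in>C'. \<forall>j\<in>S. c j = 0"
  shows "locality_on (N - S) C' r \<delta>"
  unfolding locality_on_def
proof
  fix i assume i: "i \<in> N - S"
  then obtain J where J: "i \<in> J" "J \<subseteq> N" "card J \<le> r + \<delta> - 1" "min_dist_ge (puncture J C) \<delta>"
    using assms(2) unfolding locality_on_def by blast
  have "puncture (J - S) C' = puncture J C'"
    unfolding puncture_def using assms(4) by (intro image_cong) (auto simp: fun_eq_iff)
  also have "\<dots> \<subseteq> puncture J C"
    unfolding puncture_def using assms(3) by (rule image_mono)
  finally have "min_dist_ge (puncture (J - S) C') \<delta>"
    using J(4) unfolding min_dist_ge_def by blast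
  moreover have "card (J - S) \<le> card J"
    using J(2) assms(1) by (intro card_mono) (auto intro: finite_subset)
  ultimately show "\<exists>J'. i \<in> J' \<and> J' \<subseteq> N - S \<and> card J' \<le> r + \<delta> - 1 \<and> min_dist_ge (puncture J' C') \<delta>"
    using J i by (intro exI[of _ "J - S"]) auto
qed

lemma dim_le_dim_vanishing_local_group:
  fixes C :: "(nat \<Rightarrow> 'a::{finite,field}) set"
  assumes "vs.subspace C" "finite C" "finite J" "min_dist_ge (puncture J C) \<delta>"
    and "c \<in> C" "i \<in> J" "c i \<noteq> 0"
  shows "vs.dim C + \<delta> \<le> vs.dim (vanishing_subcode J C) + card J + 1"
proof -
  let ?P = "puncture J C"
  have subP: "vs.subspace ?P"
    using assms(1) by (rule subspace_puncture)
  have "(\<lambda>j. if j \<in> J then c j else 0) \<in> ?P" "(\<lambda>j. if j \<in> J then c j else 0) \<noteq> 0"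
    using assms(5-7) by (auto simp: puncture_def fun_eq_iff)
  then have "vs.dim ?P \<ge> 1"
    using assms(2) subP by (intro dim_pos_of_nonzero) (simp_all add: puncture_def)
  then have "vs.dim ?P + \<delta> \<le> card J + 1"
    using singleton_bound[OF subP assms(3) supported_in_puncture assms(4)] by blast
  moreover have "vs.dim C \<le> vs.dim (vanishing_subcode J C) + vs.dim ?P"
    using assms(1,2) by (rule dim_le_dim_vanishing_subcode_add_dim_puncture)
  ultimately show ?thesis
    by linarith
qed

lemma exists_low_weight_codeword_locality:
  fixes C :: "(nat \<Rightarrow> 'a::{finite,field}) set"
  assumes "vs.subspace C" "finite N" "supported_in N C" "locality_on N C r \<delta>"
    and "m * r < vs.dim C" "\<delta> \<ge> 1"
  shows "\<exists>c\<in>C. c \<noteq> 0 \<and> hdist c 0 + vs.dim C + m * (\<delta> - 1) \<le> card N + 1"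
  using assms
proof (induction m arbitrary: C N)
  case 0
  then have "vs.dim C \<ge> 1"
    by simp
  with 0 show ?case
    using exists_low_weight_codeword[of C N] by (simp only: mult_0 add_0_right)
next
  case (Suc m)
  obtain c0 where c0: "c0 \<in> C" "c0 \<noteq> 0"
    using exists_nonzero_of_dim_pos[of C] Suc.prems(5) by auto
  then obtain i where i: "c0 i \<noteq> 0"
    by (auto simp: fun_eq_iff)
  then have "i \<in> N"
    using c0(1) Suc.prems(3) unfolding supported_in_def by blast
  then obtain J where J: "i \<in> J" "J \<subseteq> N" "card J \<le> r + \<delta> - 1" "min_dist_ge (puncture J C) \<delta>"
    using Suc.prems(4) unfolding locality_on_def by blast
  have finJ: "finite J"
    using J(2) Suc.prems(2) finite_subset by blast
  let ?K = "vanishing_subcode J C"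
  have dimC: "vs.dim C + \<delta> \<le> vs.dim ?K + card J + 1"
    using dim_le_dim_vanishing_local_group[OF Suc.prems(1) finite_supported_in[OF Suc.prems(2,3)]
        finJ J(4) c0(1) J(1) i] .
  have "\<exists>c\<in>?K. c \<noteq> 0 \<and> hdist c 0 + vs.dim ?K + m * (\<delta> - 1) \<le> card (N - J) + 1"
  proof (rule Suc.IH)
    show "vs.subspace ?K"
      using Suc.prems(1) by (rule subspace_vanishing_subcode)
    show "finite (N - J)"
      using Suc.prems(2) by simp
    show "supported_in (N - J) ?K"
      using Suc.prems(3) by (rule supported_in_vanishing_subcode)
    show "locality_on (N - J) ?K r \<delta>"
      using Suc.prems(2,4) by (rule locality_on_vanishing) (auto simp: vanishing_subcode_def)
    show "m * r < vs.dim ?K"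
      using Suc.prems(5,6) J(3) dimC by simp
  qed (rule Suc.prems(6))
  then obtain c where c: "c \<in> ?K" "c \<noteq> 0" "hdist c 0 + vs.dim ?K + m * (\<delta> - 1) \<le> card (N - J) + 1"
    by blast
  have "card (N - J) = card N - card J" "card J \<le> card N"
    using J(2) finJ Suc.prems(2) by (simp_all add: card_Diff_subset card_mono)
  then have "hdist c 0 + vs.dim C + Suc m * (\<delta> - 1) \<le> card N + 1"
    using c(3) dimC Suc.prems(6) by simp
  moreover have "c \<in> C"
    using c(1) unfolding vanishing_subcode_def by simp
  ultimately show ?case
    using c(2) by blast
qed

corollary exists_low_weight_codeword_locality_ceiling:
  fixes C :: "(nat \<Rightarrow> 'a::{finite,field}) set"
  assumes "vs.subspace C" "finite N" "supported_in N C" "locality_on N C r \<delta>"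
    and "vs.dim C \<ge> 1" "r \<ge> 1" "\<delta> \<ge> 1"
  shows "\<exists>c\<in>C. c \<noteq> 0 \<and> int (hdist c 0) + int (vs.dim C)
                         + (\<lceil>real (vs.dim C) / real r\<rceil> - 1) * (int \<delta> - 1) \<le> int (card N) + 1"
proof -
  let ?k = "vs.dim C"
  define m where "m = nat (\<lceil>real ?k / real r\<rceil> - 1)"
  have m: "int m = \<lceil>real ?k / real r\<rceil> - 1"
    using assms(5,6) by (simp add: m_def)
  have "(real_of_int \<lceil>real ?k / real r\<rceil> - 1) * real r < real ?k"
    using assms(6) by (intro ceiling_divide_lower) simp
  moreover have "real m = real_of_int \<lceil>real ?k / real r\<rceil> - 1"
    using m by (metis of_int_1 of_int_diff of_int_of_nat_eq)
  ultimately have "real (m * r) < real ?k"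
    by simp
  then obtain c where c: "c \<in> C" "c \<noteq> 0" "hdist c 0 + ?k + m * (\<delta> - 1) \<le> card N + 1"
    using exists_low_weight_codeword_locality[OF assms(1-4) _ assms(7)] by (meson of_nat_less_iff)
  have "int (hdist c 0) + int ?k + int m * (int \<delta> - 1) \<le> int (card N) + 1"
  proof -
    have "int (m * (\<delta> - 1)) = int m * (int \<delta> - 1)"
      using assms(7) by (simp add: of_nat_diff)
    with c(3) show ?thesis
      by linarith
  qed
  with c(1,2) show ?thesis
    unfolding m by blast
qed

section \<open>The residual code of a merge conversion\<close>

lemma member_less_sum:
  fixes f :: "'b \<Rightarrow> nat"
  assumes "finite A" "i \<in> A" "j \<in> A" "j \<noteq> i" "0 < f j"
  shows "f i < sum f A"
proof -
  have "f j \<le> sum f (A - {i})"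
    using assms by (intro member_le_sum) auto
  then show ?thesis
    using sum.remove[OF assms(1,2), of f] assms(5) by linarith
qed

lemma card_tuples:
  fixes CI :: "nat \<Rightarrow> (nat \<Rightarrow> 'a::zero) set"
  assumes "i \<in> {1..t}" "0 \<in> CI i"
  shows "card (tuples t CI) = card {c \<in> tuples t CI. c i = 0} * card (CI i)"
proof -
  have "bij_betw (\<lambda>c. (c(i := 0), c i)) (tuples t CI) ({c \<in> tuples t CI. c i = 0} \<times> CI i)"
  proof (rule bij_betwI')
    fix c d :: "nat \<Rightarrow> nat \<Rightarrow> 'a"
    show "((c(i := 0), c i) = (d(i := 0), d i)) = (c = d)"
      by (metis fun_upd_triv fun_upd_upd prod.inject)
  next
    fix c assume "c \<in> tuples t CI"
    then show "(c(i := 0), c i) \<in> {c \<in> tuples t CI. c i = 0} \<times> CI i"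
      using assms unfolding tuples_def by auto
  next
    fix p assume "p \<in> {c \<in> tuples t CI. c i = 0} \<times> CI i"
    then obtain d x where p: "p = (d, x)" "d \<in> tuples t CI" "d i = 0" "x \<in> CI i"
      by blast
    then have "d(i := x) \<in> tuples t CI" "p = ((d(i := x))(i := 0), (d(i := x)) i)"
      using assms(1) unfolding tuples_def by auto
    then show "\<exists>c\<in>tuples t CI. p = (c(i := 0), c i)"
      by blast
  qed
  then show ?thesis
    by (simp add: bij_betw_same_card card_cartesian_product)
qed

definition residual_code ::
  "nat \<Rightarrow> (nat \<Rightarrow> (nat \<Rightarrow> 'a::zero) set) \<Rightarrow> ((nat \<Rightarrow> nat \<Rightarrow> 'a) \<Rightarrow> (nat \<Rightarrow> 'a)) \<Rightarrow> nat
    \<Rightarrow> (nat \<Rightarrow> 'a) set" where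
  "residual_code t CI \<phi> i = \<phi> ` {c \<in> tuples t CI. c i = 0}"

context
  fixes CI :: "nat \<Rightarrow> (nat \<Rightarrow> 'a::{finite,field}) set"
    and t nI kI nF kF CF \<phi> U \<sigma> W R
  assumes conv: "gen_conv_code t nI kI CI nF kF CF \<phi> U \<sigma> W R"
begin

lemma gen_conv_code_initial_lin_code: "j \<in> {1..t} \<Longrightarrow> lin_code (nI j) (kI j) (CI j)"
  using conv unfolding gen_conv_code_def by (elim conjE) blast

lemma gen_conv_code_final_lin_code: "lin_code nF kF CF"
  using conv unfolding gen_conv_code_def by (elim conjE)

lemma gen_conv_code_final_dim: "kF = (\<Sum>j=1..t. kI j)"
  using conv unfolding gen_conv_code_def by (elim conjE)

lemma gen_conv_code_add: "c \<in> tuples t CI \<Longrightarrow> d \<in> tuples t CI \<Longrightarrow> \<phi> (c + d) = \<phi> c + \<phi> d"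
  using conv unfolding gen_conv_code_def by (elim conjE) blast

lemma gen_conv_code_scale: "c \<in> tuples t CI \<Longrightarrow> \<phi> (\<lambda>j. vscale a (c j)) = vscale a (\<phi> c)"
  using conv unfolding gen_conv_code_def by (elim conjE) blast

lemma gen_conv_code_bij: "bij_betw \<phi> (tuples t CI) CF"
  using conv unfolding gen_conv_code_def by (elim conjE)

lemma initial_dim_less_final_dim:
  assumes "t \<ge> 2" "\<forall>j\<in>{1..t}. kI j \<ge> 1" "i \<in> {1..t}"
  shows "kI i < kF"
proof -
  obtain j where j: "j \<in> {1..t}" "j \<noteq> i"
    using assms(1,3) by (cases "i = 1") (auto intro: that[of 1] that[of 2])
  then have "kI j \<ge> 1"
    using assms(2) by blast
  then show ?thesis
    using member_less_sum[of "{1..t}" i j kI] gen_conv_code_final_dim assms(3) j by simp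
qed

context
  fixes i
  assumes i: "i \<in> {1..t}"
begin

lemma gen_conv_code_unchanged: "c \<in> tuples t CI \<Longrightarrow> u \<in> U i \<Longrightarrow> \<phi> c (\<sigma> i u) = c i u"
  using conv i unfolding gen_conv_code_def by (elim conjE) blast

lemma card_unchanged_positions_complement: "card ({0..<nF} - \<sigma> i ` U i) + card (U i) = nF"
proof -
  have "\<forall>i\<in>{1..t}. \<forall>u\<in>U i. \<sigma> i u < nF"
    using conv unfolding gen_conv_code_def by (elim conjE)
  with i have sub: "\<sigma> i ` U i \<subseteq> {0..<nF}"
    by auto
  have "\<forall>i\<in>{1..t}. \<forall>j\<in>{1..t}. \<forall>u\<in>U i. \<forall>v\<in>U j. \<sigma> i u = \<sigma> j v \<longrightarrow> i = j \<and> u = v"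
    using conv unfolding gen_conv_code_def by (elim conjE)
  with i have "inj_on (\<sigma> i) (U i)"
    by (intro inj_onI) blast
  then have "card (\<sigma> i ` U i) = card (U i)"
    by (rule card_image)
  moreover have "card (\<sigma> i ` U i) \<le> nF"
    using card_mono[OF _ sub] by simp
  ultimately show ?thesis
    using sub by (simp add: card_Diff_subset finite_subset)
qed

lemma residual_code_subset: "residual_code t CI \<phi> i \<subseteq> CF"
  using gen_conv_code_bij unfolding residual_code_def bij_betw_def by blast

lemma residual_code_vanishes_on_unchanged:
  "\<forall>c\<in>residual_code t CI \<phi> i. \<forall>j\<in>\<sigma> i ` U i. c j = 0"
  unfolding residual_code_def using gen_conv_code_unchanged by auto

lemma supported_in_residual_code: "supported_in ({0..<nF} - \<sigma> i ` U i) (residual_code t CI \<phi> i)"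
  using supported_in_of_lin_code[OF gen_conv_code_final_lin_code] residual_code_subset
    residual_code_vanishes_on_unchanged unfolding supported_in_def by blast

lemma locality_on_residual_code:
  assumes "has_locality nF CF r \<delta>"
  shows "locality_on ({0..<nF} - \<sigma> i ` U i) (residual_code t CI \<phi> i) r \<delta>"
  using assms residual_code_subset residual_code_vanishes_on_unchanged
  unfolding has_locality_iff_locality_on by (intro locality_on_vanishing) auto

lemma subspace_residual_code: "vs.subspace (residual_code t CI \<phi> i)"
proof -
  let ?T0 = "{c \<in> tuples t CI. c i = 0}"
  have sub: "vs.subspace (CI j)" if "j \<in> {1..t}" for j
    using gen_conv_code_initial_lin_code[OF that] by (rule subspace_of_lin_code)
  have zero: "0 \<in> ?T0"
    using vs.subspace_0[OF sub] unfolding tuples_def by auto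
  have add: "c + d \<in> ?T0" if "c \<in> ?T0" "d \<in> ?T0" for c d
    using that vs.subspace_add[OF sub] unfolding tuples_def by auto
  have scale: "(\<lambda>j. vscale a (c j)) \<in> ?T0" if "c \<in> ?T0" for a c
    using that vs.subspace_scale[OF sub] unfolding tuples_def by (auto simp: vscale_def)
  have "\<phi> (0 + 0) = \<phi> 0 + \<phi> 0"
    using zero by (intro gen_conv_code_add) simp_all
  then have "\<phi> 0 = 0"
    by (simp only: add_0 add_cancel_right_right)
  show ?thesis
    unfolding vs.subspace_def residual_code_def
  proof (intro conjI ballI allI)
    show "0 \<in> \<phi> ` ?T0"
      using rev_image_eqI[OF zero, of 0 \<phi>] \<open>\<phi> 0 = 0\<close> by simp
  next
    fix x y assume "x \<in> \<phi> ` ?T0" "y \<in> \<phi> ` ?T0"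
    then obtain c d where cd: "c \<in> ?T0" "d \<in> ?T0" "x = \<phi> c" "y = \<phi> d"
      by blast
    then show "x + y \<in> \<phi> ` ?T0"
      by (intro rev_image_eqI[OF add[OF cd(1,2)]]) (simp add: gen_conv_code_add)
  next
    fix a x assume "x \<in> \<phi> ` ?T0"
    then obtain c where c: "c \<in> ?T0" "x = \<phi> c"
      by blast
    then show "vscale a x \<in> \<phi> ` ?T0"
      by (intro rev_image_eqI[OF scale[where a=a, OF c(1)]]) (simp add: gen_conv_code_scale)
  qed
qed

lemma dim_residual_code: "vs.dim (residual_code t CI \<phi> i) + kI i = kF"
proof -
  let ?T0 = "{c \<in> tuples t CI. c i = 0}"
  have "0 \<in> CI i"
    using gen_conv_code_initial_lin_code[OF i] unfolding lin_code_def by blast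
  then have "card CF = card ?T0 * card (CI i)"
    using bij_betw_same_card[OF gen_conv_code_bij] card_tuples[OF i, of CI] by simp
  moreover have "card (residual_code t CI \<phi> i) = card ?T0"
    unfolding residual_code_def using bij_betw_imp_inj_on[OF gen_conv_code_bij]
    by (intro card_image) (auto intro: inj_on_subset)
  moreover have "card (residual_code t CI \<phi> i) = CARD('a) ^ vs.dim (residual_code t CI \<phi> i)"
    using finite_lin_code[OF gen_conv_code_final_lin_code] residual_code_subset
    by (intro card_subspace subspace_residual_code) (rule finite_subset)
  ultimately have "CARD('a) ^ kF = CARD('a) ^ (vs.dim (residual_code t CI \<phi> i) + kI i)"
    using card_lin_code[OF gen_conv_code_final_lin_code]
      card_lin_code[OF gen_conv_code_initial_lin_code[OF i]] by (simp add: power_add)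
  then show ?thesis
    using one_less_card_field[where 'a='a] by simp
qed

end

end

theorem mainTheorem1:
  fixes t nF kF r \<delta> :: nat
    and nI kI :: "nat \<Rightarrow> nat"
    and CI :: "nat \<Rightarrow> (nat \<Rightarrow> 'a::{finite,field}) set"
    and CF :: "(nat \<Rightarrow> 'a) set"
    and \<phi> :: "(nat \<Rightarrow> nat \<Rightarrow> 'a) \<Rightarrow> (nat \<Rightarrow> 'a)"
    and U R :: "nat \<Rightarrow> nat set" and \<sigma> :: "nat \<Rightarrow> nat \<Rightarrow> nat" and W :: "nat set"
  assumes "t \<ge> 2"
    and "gen_conv_code t nI kI CI nF kF CF \<phi> U \<sigma> W R"
    and "\<forall>i\<in>{1..t}. kI i \<ge> 1"
    and "r \<ge> 1" and "\<delta> \<ge> 2"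
    and "has_locality nF CF r \<delta>"
    and "i \<in> {1..t}"
  shows "int (card (U i)) \<le> int (kI i) + int nF - int kF - int (min_dist CF) + 1
           - (\<lceil>real (kF - kI i) / real r\<rceil> - 1) * (int \<delta> - 1)"
proof -
  let ?C = "residual_code t CI \<phi> i" and ?N = "{0..<nF} - \<sigma> i ` U i"
  note conv = assms(2) and i = assms(7)
  have "kI i < kF"
    using initial_dim_less_final_dim[OF conv assms(1,3) i] .
  then have dim: "vs.dim ?C = kF - kI i" "vs.dim ?C \<ge> 1"
    using dim_residual_code[OF conv i] by auto
  obtain c where c: "c \<in> ?C" "c \<noteq> 0"
    "int (hdist c 0) + int (vs.dim ?C) + (\<lceil>real (vs.dim ?C) / real r\<rceil> - 1) * (int \<delta> - 1)
       \<le> int (card ?N) + 1"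
    using exists_low_weight_codeword_locality_ceiling[OF subspace_residual_code[OF conv i] _
        supported_in_residual_code[OF conv i] locality_on_residual_code[OF conv i assms(6)] dim(2)]
      assms(4,5) by fastforce
  have "min_dist CF \<le> hdist c 0"
    using min_dist_le_weight[OF gen_conv_code_final_lin_code[OF conv]]
      residual_code_subset[OF conv i] c(1,2) by blast
  moreover have "card ?N + card (U i) = nF"
    by (rule card_unchanged_positions_complement[OF conv i])
  ultimately show ?thesis
    using c(3) unfolding dim(1) by linarith
qed

end
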